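(* Assume $\|\mathbf G^{(l)}\|\le A_0B_0^{l-1}$ for all $l\ge1$. For each distinct eigenvalue $\mu_h$ of $\mathbf U$, writing $\hat{\mathbf P}_h(\chi)=\hat{\mathbf P}_h+\sum_{n\ge1}\chi^n\hat{\mathbf P}_h^{(n)}$, there exist constants $A_6,B_6>0$ depending on $N$, $A_0$, $B_0$, the entries of $\mathbf G$ and the isolation distances of $\mathbf T$ such that $\|\hat{\mathbf P}_h^{(n)}\|\le A_6B_6^{n-1}$ for all $n\ge1$ and all $h$.
   Context: $\mathbf G=[g_{ij}]$ is an $N\times N$ Google matrix with all entries positive. Perturbation: $\mathbf G(\chi)=[g_{ij}(\chi)]=\mathbf G+\sum_{l\ge1}\chi^l\mathbf G^{(l)}$, $\chi\in\mathbb C$, convergent near $0$, $\|\cdot\|$ the operator $2$-norm; for real $\chi$ near $0$, $\mathbf G(\chi)$ is row-stochastic with positive entries. $\mathbf T(\chi)=[\sqrt{g_{ij}(\chi)g_{ji}(\chi)}]$, $\mathbf T=\mathbf T(0)$ with distinct eigenvalues $\lambda_1,\dots,\lambda_s$; the isolation distance of $\lambda_h$ is $\min_{k\ne h}|\lambda_k-\lambda_h|$. In $\mathbb C^N\otimes\mathbb C^N$: $|\psi_j(\chi)\rangle=|j\rangle\otimes\sum_k\sqrt{g_{jk}(\chi)}|k\rangle$, $\mathbf B(\chi)=\sum_j|\psi_j(\chi)\rangle\langle\psi_j(\chi)|$ (expanded as a power series in $\chi$), $\mathbf S_w=\sum_{j,k}|k,j\rangle\langle j,k|$, $\mathbf U(\chi)=\mathbf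 S_w(2\mathbf B(\chi)-\mathbf I)$, $\mathbf U=\mathbf U(0)$ (unitary). For a distinct eigenvalue $\mu_h$ of $\mathbf U$, $\hat{\mathbf P}_h(\chi)=-\frac{1}{2\pi\mathrm i}\oint_{\hat\Gamma_h}(\mathbf U(\chi)-\zeta\mathbf I)^{-1}d\zeta$, where $\hat\Gamma_h$ is a circle around $\mu_h$ enclosing no other eigenvalue of $\mathbf U$; $\hat{\mathbf P}_h=\hat{\mathbf P}_h(0)$. *)

theory Defs
  imports "HOL-Complex_Analysis.Complex_Analysis"
begin

definition opnorm :: "complex^'n::finite^'m::finite \<Rightarrow> real" where
  "opnorm A = onorm (\<lambda>x::complex^'n::finite. A *v x)"

definition is_eigenvalue :: "complex^'n::finite^'n \<Rightarrow> complex \<Rightarrow> bool" where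
  "is_eigenvalue A \<mu> \<longleftrightarrow> (\<exists>v. v \<noteq> 0 \<and> A *v v = \<mu> *s v)"

definition pos_row_stochastic :: "real^'n::finite^'n \<Rightarrow> bool" where
  "pos_row_stochastic M \<longleftrightarrow> (\<forall>i j. M $ i $ j > 0) \<and> (\<forall>i. (\<Sum>j\<in>UNIV. M $ i $ j) = 1)"

definition Gpert :: "real^'n::finite^'n \<Rightarrow> (nat \<Rightarrow> complex^'n::finite^'n) \<Rightarrow> complex \<Rightarrow> complex^'n::finite^'n" where
  "Gpert G Gl z = (\<chi> i j. complex_of_real (G $ i $ j) + (\<Sum>l. z ^ Suc l * (Gl (Suc l) $ i $ j)))"

text \<open>B(chi) = sum_j |psi_j(chi)><psi_j(chi)| on C^N (x) C^N, index (j,k) = |j>(x)|k>,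
  with |psi_j(chi)> = |j> (x) sum_k sqrt(g_jk(chi)) |k>; the bra is the analytic
  continuation (no complex conjugation), i.e. B(chi) is expanded as a power series in chi.\<close>
definition psi :: "complex^'n::finite^'n \<Rightarrow> 'n \<Rightarrow> complex^('n \<times> 'n)" where
  "psi M j = (\<chi> p. if fst p = j then csqrt (M $ fst p $ snd p) else 0)"

definition Bop :: "complex^'n::finite^'n \<Rightarrow> complex^('n::finite \<times> 'n)^('n \<times> 'n)" where
  "Bop M = (\<chi> p q. \<Sum>j\<in>UNIV. psi M j $ p * psi M j $ q)"

definition swap_op :: "complex^('n::finite \<times> 'n)^('n \<times> 'n)" where
  "swap_op = (\<chi> p q. if fst p = snd q \<and> snd p = fst q then 1 else 0)"

definition Uop :: "real^'n::finite^'n \<Rightarrow> (nat \<Rightarrow> complex^'n::finite^'n) \<Rightarrow> complex \<Rightarrow> complex^('n::finite \<times> 'n)^('n \<times> 'n)" where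
  "Uop G Gl z = swap_op ** (2 *\<^sub>R Bop (Gpert G Gl z) - mat 1)"

definition Phat :: "real^'n::finite^'n \<Rightarrow> (nat \<Rightarrow> complex^'n::finite^'n) \<Rightarrow> complex \<Rightarrow> real \<Rightarrow> complex
    \<Rightarrow> complex^('n::finite \<times> 'n)^('n \<times> 'n)" where
  "Phat G Gl \<mu> r z = (\<chi> p q. - (1 / (2 * pi * \<i>)) *
      contour_integral (circlepath \<mu> r) (\<lambda>\<zeta>. matrix_inv (Uop G Gl z - mat \<zeta>) $ p $ q))"

definition Phat_coeff :: "real^'n::finite^'n \<Rightarrow> (nat \<Rightarrow> complex^'n::finite^'n) \<Rightarrow> complex \<Rightarrow> real \<Rightarrow> nat
    \<Rightarrow> complex^('n::finite \<times> 'n)^('n \<times> 'n)" where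
  "Phat_coeff G Gl \<mu> r n = (\<chi> p q. (deriv ^^ n) (\<lambda>z. Phat G Gl \<mu> r z $ p $ q) 0 / fact n)"

end

theory Submission
  imports Defs
begin

text \<open>The Riesz projection \<open>P\<^sub>h(\<chi>)\<close> is entrywise holomorphic in \<open>\<chi>\<close>, and its entries are
  contour integrals of resolvent entries, i.e. of ratios of determinants (Cramer's rule).
  Since \<open>U(0)\<close> does not depend on the perturbation, Cauchy's theorem on an eigenvalue-free
  annulus lets one replace the circle of radius \<open>r\<close> by one of a radius \<open>R\<close> chosen once
  and for all from the spectrum of \<open>U(0)\<close>. On the finitely many such circles the resolvent of
  \<open>U(\<chi>)\<close> is bounded uniformly in all perturbations obeying the geometric bound and all
  \<open>|\<chi>| < \<rho>\<close>, so Cauchy's inequality bounds the \<open>n\<close>-th Taylor coefficient by \<open>K / \<rho>\<^sup>n\<close>.\<close>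

section \<open>Matrix norms\<close>

lemma opnorm_le_sum_norm_entries:
  fixes A :: "complex^'n^'m"
  shows "opnorm A \<le> (\<Sum>i\<in>UNIV. \<Sum>j\<in>UNIV. cmod (A $ i $ j))"
  unfolding opnorm_def
proof (rule onorm_le)
  fix x :: "complex^'n"
  have "norm (A *v x) \<le> (\<Sum>i\<in>UNIV. norm ((A *v x) $ i))"
    by (simp add: norm_vec_def L2_set_le_sum)
  also have "\<dots> \<le> (\<Sum>i\<in>UNIV. \<Sum>j\<in>UNIV. cmod (A $ i $ j) * norm x)"
  proof (rule sum_mono)
    fix i
    have "norm ((A *v x) $ i) = norm (\<Sum>j\<in>UNIV. A $ i $ j * x $ j)"
      by (simp add: matrix_vector_mult_def)
    also have "\<dots> \<le> (\<Sum>j\<in>UNIV. norm (A $ i $ j * x $ j))"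
      by (rule norm_sum)
    also have "\<dots> \<le> (\<Sum>j\<in>UNIV. cmod (A $ i $ j) * norm x)"
      by (rule sum_mono)
         (simp add: norm_mult mult_left_mono[OF Finite_Cartesian_Product.norm_nth_le norm_ge_zero])
    finally show "norm ((A *v x) $ i) \<le> (\<Sum>j\<in>UNIV. cmod (A $ i $ j) * norm x)" .
  qed
  finally show "norm (A *v x) \<le> (\<Sum>i\<in>UNIV. \<Sum>j\<in>UNIV. cmod (A $ i $ j)) * norm x"
    by (simp add: sum_distrib_right)
qed

lemma opnorm_le_entrywise_bound:
  fixes A :: "complex^'n^'m"
  assumes "\<And>i j. cmod (A $ i $ j) \<le> c"
  shows "opnorm A \<le> real CARD('m) * real CARD('n) * c"
proof -
  have "opnorm A \<le> (\<Sum>i\<in>(UNIV::'m set). \<Sum>j\<in>(UNIV::'n set). c)"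
    using opnorm_le_sum_norm_entries[of A] sum_mono[OF sum_mono[OF assms]] by (rule order_trans)
  then show ?thesis by simp
qed

lemma norm_entry_le_opnorm:
  fixes A :: "complex^'n^'m"
  shows "cmod (A $ i $ j) \<le> opnorm A"
proof -
  have "(A *v axis j 1) $ i = A $ i $ j"
    by (simp add: matrix_vector_mult_def axis_def if_distrib cong: if_cong)
  hence "cmod (A $ i $ j) \<le> norm (A *v axis j 1)"
    using Finite_Cartesian_Product.norm_nth_le[where x="A *v axis j 1"] by metis
  also have "\<dots> \<le> opnorm A * norm (axis j (1::complex))"
    unfolding opnorm_def using onorm [OF matrix_vector_mul_bounded_linear, of A "axis j 1"] by auto
  also have "norm (axis j (1::complex)) = 1"
    by (simp add: norm_vec_def L2_set_def axis_def power2_eq_square if_distrib[where f=norm]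
        if_distrib[where f="\<lambda>x. x*x"] cong: if_cong)
  finally show ?thesis by simp
qed

lemma norm_matrix_le_sum_norm_entries:
  fixes M :: "complex^'n^'m"
  shows "norm M \<le> (\<Sum>i\<in>UNIV. \<Sum>j\<in>UNIV. cmod (M $ i $ j))"
proof -
  have "norm M \<le> (\<Sum>i\<in>UNIV. norm (M $ i))"
    by (simp add: norm_vec_def L2_set_le_sum)
  also have "\<dots> \<le> (\<Sum>i\<in>UNIV. \<Sum>j\<in>UNIV. cmod (M $ i $ j))"
    by (intro sum_mono) (simp add: norm_vec_def L2_set_le_sum)
  finally show ?thesis .
qed

lemma norm_entry_le_norm_matrix:
  fixes M :: "complex^'n^'m"
  shows "cmod (M $ i $ j) \<le> norm M"
  by (meson Finite_Cartesian_Product.norm_nth_le order_trans)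

section \<open>Determinants, Cramer's rule and eigenvalues\<close>

lemma continuous_on_det:
  fixes M :: "'a::topological_space \<Rightarrow> complex^'m^'m"
  assumes "\<And>i j. continuous_on S (\<lambda>x. M x $ i $ j)"
  shows "continuous_on S (\<lambda>x. det (M x))"
  unfolding det_def by (intro continuous_intros assms)

lemma holomorphic_on_det:
  fixes M :: "complex \<Rightarrow> complex^'m^'m"
  assumes "\<And>i j. (\<lambda>x. M x $ i $ j) holomorphic_on S"
  shows "(\<lambda>x. det (M x)) holomorphic_on S"
  unfolding det_def by (intro holomorphic_intros assms)

lemma continuous_on_if_const:
  "continuous_on S f \<Longrightarrow> continuous_on S g \<Longrightarrow> continuous_on S (\<lambda>x. if c then f x else g x)"
  by (cases c) auto

lemma holomorphic_on_if_const:
  "f holomorphic_on S \<Longrightarrow> g holomorphic_on S \<Longrightarrow> (\<lambda>x. if c then f x else g x) holomorphic_on S"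
  by (cases c) auto

definition replace_column_axis :: "complex^'m^'m \<Rightarrow> 'm \<Rightarrow> 'm \<Rightarrow> complex^'m^'m" where
  "replace_column_axis A k q = (\<chi> i j. if j = k then (if i = q then 1 else 0) else A $ i $ j)"

lemma replace_column_axis_nth:
  "replace_column_axis A k q $ i $ j = (if j = k then (if i = q then 1 else 0) else A $ i $ j)"
  by (simp add: replace_column_axis_def)

lemma matrix_mul_matrix_inv:
  fixes A :: "'a::semiring_1^'n^'n"
  assumes "invertible A"
  shows "A ** matrix_inv A = mat 1"
proof -
  obtain A' where A': "A ** A' = mat 1" "A' ** A = mat 1" using assms unfolding invertible_def by blast
  have "A ** matrix_inv A = mat 1 \<and> matrix_inv A ** A = mat 1"
    unfolding matrix_inv_def by (rule someI[of _ A']) (use A' in auto)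
  then show ?thesis ..
qed

lemma matrix_inv_nth_cramer:
  fixes A :: "complex^'m^'m"
  assumes "det A \<noteq> 0"
  shows "matrix_inv A $ k $ q = det (replace_column_axis A k q) / det A"
proof -
  have "invertible A" using assms invertible_det_nz by blast
  hence "A ** matrix_inv A = mat 1" by (rule matrix_mul_matrix_inv)
  define x where "x = matrix_inv A *v axis q 1"
  have "A *v x = axis q 1"
    unfolding x_def by (simp add: matrix_vector_mul_assoc \<open>A ** matrix_inv A = mat 1\<close>)
  hence "x = (\<chi> k. det (\<chi> i j. if j = k then (axis q 1::complex^'m) $ i else A $ i $ j) / det A)"
    using cramer[OF assms] by blast
  hence "x $ k = det (replace_column_axis A k q) / det A"
    by (simp add: replace_column_axis_def axis_def cong: if_cong)
  moreover have "x $ k = matrix_inv A $ k $ q"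
    by (simp add: x_def matrix_vector_mult_def axis_def if_distrib cong: if_cong)
  ultimately show ?thesis by simp
qed

lemma continuous_on_matrix_inv_nth:
  fixes A :: "complex^'m^'m"
  assumes "\<And>\<zeta>. \<zeta> \<in> K \<Longrightarrow> det (A - mat \<zeta>) \<noteq> 0"
  shows "continuous_on K (\<lambda>\<zeta>. matrix_inv (A - mat \<zeta>) $ k $ q)"
proof -
  have "continuous_on K (\<lambda>\<zeta>. det (replace_column_axis (A - mat \<zeta>) k q) / det (A - mat \<zeta>))"
    using assms
    by (intro continuous_on_divide continuous_on_det)
       (auto simp: replace_column_axis_nth mat_def intro!: continuous_intros continuous_on_if_const)
  thus ?thesis
    by (rule continuous_on_cong[THEN iffD1, rotated 2]) (auto simp: matrix_inv_nth_cramer assms)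
qed

lemma holomorphic_on_matrix_inv_nth:
  fixes A :: "complex^'m^'m"
  assumes "\<And>\<zeta>. \<zeta> \<in> K \<Longrightarrow> det (A - mat \<zeta>) \<noteq> 0"
  shows "(\<lambda>\<zeta>. matrix_inv (A - mat \<zeta>) $ k $ q) holomorphic_on K"
proof -
  have "(\<lambda>\<zeta>. det (replace_column_axis (A - mat \<zeta>) k q) / det (A - mat \<zeta>)) holomorphic_on K"
    using assms
    by (intro holomorphic_on_divide holomorphic_on_det)
       (auto simp: replace_column_axis_nth mat_def intro!: holomorphic_intros holomorphic_on_if_const)
  thus ?thesis
    by (rule holomorphic_transform) (auto simp: matrix_inv_nth_cramer assms)
qed

lemma is_eigenvalue_iff_det:
  fixes A :: "complex^'m^'m"
  shows "is_eigenvalue A \<mu> \<longleftrightarrow> det (A - mat \<mu>) = 0"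
proof -
  have mat_mult: "(mat c :: complex^'m^'m) *v v = c *s v" for c v
    by (simp add: vec_eq_iff matrix_vector_mult_def mat_def if_distrib[where f="\<lambda>x. x * _"]
        cong: if_cong)
  have "det (A - mat \<mu>) \<noteq> 0 \<longleftrightarrow> inj ((*v) (A - mat \<mu>))"
    using det_nz_iff_inj_gen[OF matrix_vector_mul_linear_gen, of "A - mat \<mu>"]
    by (simp add: matrix_of_matrix_vector_mul)
  also have "\<dots> \<longleftrightarrow> (\<forall>x. (A - mat \<mu>) *v x = 0 \<longrightarrow> x = 0)"
    by (rule vec.inj_iff_eq_0)
  also have "\<dots> \<longleftrightarrow> \<not> is_eigenvalue A \<mu>"
    by (auto simp: is_eigenvalue_def matrix_vector_mult_diff_rdistrib mat_mult)
  finally show ?thesis by blast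
qed

lemma norm_eigenvalue_le_sum_norm_entries:
  fixes A :: "complex^'m^'m"
  assumes "is_eigenvalue A \<mu>"
  shows "cmod \<mu> \<le> (\<Sum>i\<in>UNIV. \<Sum>j\<in>UNIV. cmod (A $ i $ j))"
proof -
  obtain v where v: "v \<noteq> 0" "A *v v = \<mu> *s v" using assms unfolding is_eigenvalue_def by blast
  have "norm (\<mu> *s v) = cmod \<mu> * norm v"
    unfolding norm_vec_def by (simp add: L2_set_right_distrib norm_mult)
  hence "cmod \<mu> * norm v = norm (A *v v)" using v by simp
  also have "\<dots> \<le> opnorm A * norm v"
    unfolding opnorm_def by (rule onorm[OF matrix_vector_mul_bounded_linear])
  also have "\<dots> \<le> (\<Sum>i\<in>UNIV. \<Sum>j\<in>UNIV. cmod (A $ i $ j)) * norm v"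
    by (intro mult_right_mono opnorm_le_sum_norm_entries) auto
  finally show ?thesis using v(1) by simp
qed

text \<open>\<open>\<zeta> \<mapsto> det (A - \<zeta> I)\<close> is entire and nonzero just outside the disc containing the
  spectrum, so it has finitely many zeros in that disc.\<close>
lemma finite_eigenvalues:
  fixes A :: "complex^'m^'m"
  shows "finite {\<mu>. is_eigenvalue A \<mu>}"
proof -
  define S0 where "S0 = (\<Sum>i\<in>UNIV. \<Sum>j\<in>UNIV. cmod (A $ i $ j))"
  define f where "f \<zeta> = det (A - mat \<zeta>)" for \<zeta>
  have hol: "f holomorphic_on UNIV"
    unfolding f_def
    by (intro holomorphic_on_det) (auto simp: mat_def intro!: holomorphic_intros holomorphic_on_if_const)
  have sub: "{\<mu>. is_eigenvalue A \<mu>} \<subseteq> {z \<in> cball 0 S0. f z = 0}"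
    using norm_eigenvalue_le_sum_norm_entries[of A] by (auto simp: f_def is_eigenvalue_iff_det S0_def)
  have "f (of_real (S0 + 1)) \<noteq> 0"
  proof
    assume "f (of_real (S0 + 1)) = 0"
    hence "is_eigenvalue A (of_real (S0 + 1))" by (simp add: f_def is_eigenvalue_iff_det)
    from norm_eigenvalue_le_sum_norm_entries[OF this]
    have "cmod (complex_of_real (S0 + 1)) \<le> S0" by (simp add: S0_def)
    moreover have "S0 \<ge> 0" unfolding S0_def by (intro sum_nonneg) auto
    ultimately show False by (simp only: norm_of_real)
  qed
  show ?thesis
  proof (cases "f constant_on UNIV")
    case True
    then have "{z \<in> cball 0 S0. f z = 0} = {}"
      using \<open>f (of_real (S0 + 1)) \<noteq> 0\<close> unfolding constant_on_def by auto
    then show ?thesis using sub by (metis finite.emptyI finite_subset)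
  next
    case False
    have "finite {z \<in> cball 0 S0. f z = 0}"
      by (rule holomorphic_compact_finite_zeros[OF hol]) (use False in auto)
    then show ?thesis by (rule finite_subset[OF sub])
  qed
qed

lemma eigenvalues_separated:
  fixes A :: "complex^'m^'m"
  obtains R where "R > 0"
    "\<And>\<mu> \<mu>'. is_eigenvalue A \<mu> \<Longrightarrow> is_eigenvalue A \<mu>' \<Longrightarrow> \<mu> \<noteq> \<mu>' \<Longrightarrow> R < cmod (\<mu>' - \<mu>)"
proof -
  define EV where "EV = {\<mu>. is_eigenvalue A \<mu>}"
  define Ds where "Ds = insert 1 ((\<lambda>p. cmod (snd p - fst p)) ` {p \<in> EV \<times> EV. fst p \<noteq> snd p})"
  have finD: "finite Ds" unfolding Ds_def EV_def using finite_eigenvalues[of A] by auto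
  have "Min Ds \<in> Ds" using finD by (intro Min_in) (auto simp: Ds_def)
  hence d0: "Min Ds > 0" by (auto simp: Ds_def)
  have dle: "Min Ds \<le> cmod (\<mu>' - \<mu>)" if "\<mu> \<in> EV" "\<mu>' \<in> EV" "\<mu> \<noteq> \<mu>'" for \<mu> \<mu>'
    using finD that by (intro Min_le) (auto simp: Ds_def intro!: image_eqI[of _ _ "(\<mu>, \<mu>')"])
  show ?thesis
  proof (rule that[of "Min Ds / 2"])
    show "Min Ds / 2 > 0" using d0 by simp
    fix \<mu> \<mu>' assume "is_eigenvalue A \<mu>" "is_eigenvalue A \<mu>'" "\<mu> \<noteq> \<mu>'"
    then have "Min Ds \<le> cmod (\<mu>' - \<mu>)" using dle by (simp add: EV_def)
    then show "Min Ds / 2 < cmod (\<mu>' - \<mu>)" using d0 by linarith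
  qed
qed

section \<open>Resolvents\<close>

text \<open>By uniform continuity of \<open>det\<close> and of the Cramer numerators on a compact set.\<close>
lemma resolvent_perturbation_bound:
  fixes U0 :: "complex^'m^'m"
  assumes K: "compact K" and nz: "\<And>\<zeta>. \<zeta> \<in> K \<Longrightarrow> det (U0 - mat \<zeta>) \<noteq> 0"
  obtains \<epsilon> C where "\<epsilon> > 0" "\<And>E \<zeta>. norm E \<le> \<epsilon> \<Longrightarrow> \<zeta> \<in> K \<Longrightarrow> det (U0 + E - mat \<zeta>) \<noteq> 0"
    "\<And>E \<zeta> k q. norm E \<le> \<epsilon> \<Longrightarrow> \<zeta> \<in> K \<Longrightarrow> cmod (matrix_inv (U0 + E - mat \<zeta>) $ k $ q) \<le> C"
proof (cases "K = {}")
  case True then show ?thesis using that[of 1 0] by auto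
next
  case False
  define D where "D x = det (U0 + fst x - mat (snd x))" for x :: "(complex^'m^'m) \<times> complex"
  define Nm where "Nm x = (\<Sum>k\<in>UNIV. \<Sum>q\<in>UNIV. cmod (det (replace_column_axis (U0 + fst x - mat (snd x)) k q)))"
    for x :: "(complex^'m^'m) \<times> complex"
  define X where "X = cball (0::complex^'m^'m) 1 \<times> K"
  have X: "compact X" unfolding X_def by (intro compact_Times K compact_cball)
  have contD: "continuous_on UNIV D"
    unfolding D_def
    by (intro continuous_on_det) (auto simp: mat_def intro!: continuous_intros continuous_on_if_const)
  have contN: "continuous_on UNIV Nm"
    unfolding Nm_def replace_column_axis_def
    by (intro continuous_intros continuous_on_det)
       (auto simp: mat_def intro!: continuous_intros continuous_on_if_const)
  have "continuous_on K (\<lambda>\<zeta>. cmod (D (0, \<zeta>)))"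
    by (intro continuous_intros continuous_on_compose2[OF contD]) auto
  then obtain \<zeta>0 where \<zeta>0: "\<zeta>0 \<in> K" "\<And>\<zeta>. \<zeta> \<in> K \<Longrightarrow> cmod (D (0, \<zeta>0)) \<le> cmod (D (0, \<zeta>))"
    using continuous_attains_inf[OF K False] by blast
  define m where "m = cmod (D (0, \<zeta>0))"
  have m0: "m > 0" using nz[OF \<zeta>0(1)] by (simp add: m_def D_def)
  have "uniformly_continuous_on X D"
    by (rule compact_uniformly_continuous[OF continuous_on_subset[OF contD] X]) auto
  then obtain \<eta> where \<eta>: "\<eta> > 0"
    "\<And>x x'. x \<in> X \<Longrightarrow> x' \<in> X \<Longrightarrow> dist x' x < \<eta> \<Longrightarrow> dist (D x') (D x) < m / 2"
    unfolding uniformly_continuous_on_def using m0 by (metis half_gt_zero)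
  have "bounded (Nm ` X)"
    by (intro compact_imp_bounded compact_continuous_image continuous_on_subset[OF contN] X) auto
  then obtain B where B: "\<And>x. x \<in> X \<Longrightarrow> norm (Nm x) \<le> B" unfolding bounded_iff by blast
  define \<epsilon> where "\<epsilon> = min 1 (\<eta> / 2)"
  have Dlow: "cmod (D (E, \<zeta>)) \<ge> m / 2" if E: "norm E \<le> \<epsilon>" and \<zeta>: "\<zeta> \<in> K" for E \<zeta>
  proof -
    have "(E, \<zeta>) \<in> X" "(0, \<zeta>) \<in> X" using E \<zeta> by (auto simp: X_def \<epsilon>_def)
    moreover have "dist (E, \<zeta>) (0, \<zeta>) < \<eta>" using E \<eta> by (simp add: dist_Pair_Pair \<epsilon>_def dist_norm)
    ultimately have "dist (D (E, \<zeta>)) (D (0, \<zeta>)) < m / 2" using \<eta>(2) by blast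
    moreover have "m \<le> cmod (D (0, \<zeta>))" using \<zeta>0(2)[OF \<zeta>] by (simp add: m_def)
    ultimately show ?thesis
      using norm_triangle_ineq2[of "D (0, \<zeta>)" "D (E, \<zeta>)"] by (simp add: dist_norm norm_minus_commute)
  qed
  have inv: "cmod (matrix_inv (U0 + E - mat \<zeta>) $ k $ q) \<le> B / (m / 2)"
    if E: "norm E \<le> \<epsilon>" and \<zeta>: "\<zeta> \<in> K" for E \<zeta> k q
  proof -
    have "(E, \<zeta>) \<in> X" using E \<zeta> by (auto simp: X_def \<epsilon>_def)
    have "cmod (det (replace_column_axis (U0 + E - mat \<zeta>) k q)) \<le> Nm (E, \<zeta>)"
      unfolding Nm_def fst_conv snd_conv
      by (rule order_trans[OF _ member_le_sum[of k]], rule member_le_sum[of q]) (auto intro!: sum_nonneg)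
    also have "\<dots> \<le> B" using B[OF \<open>(E, \<zeta>) \<in> X\<close>] by simp
    finally have nb: "cmod (det (replace_column_axis (U0 + E - mat \<zeta>) k q)) \<le> B" .
    have dnz: "det (U0 + E - mat \<zeta>) \<noteq> 0" using Dlow[OF E \<zeta>] m0 by (auto simp: D_def)
    have "cmod (matrix_inv (U0 + E - mat \<zeta>) $ k $ q)
          = cmod (det (replace_column_axis (U0 + E - mat \<zeta>) k q)) / cmod (D (E, \<zeta>))"
      using matrix_inv_nth_cramer[OF dnz] by (simp add: D_def norm_divide)
    also have "\<dots> \<le> B / (m / 2)"
      using nb Dlow[OF E \<zeta>] m0 by (intro frac_le) (auto intro: order_trans[OF norm_ge_zero])
    finally show ?thesis .
  qed
  show ?thesis
  proof (rule that[of \<epsilon> "B / (m / 2)"])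
    show "\<epsilon> > 0" using \<eta> by (simp add: \<epsilon>_def)
    show "det (U0 + E - mat \<zeta>) \<noteq> 0" if "norm E \<le> \<epsilon>" "\<zeta> \<in> K" for E \<zeta>
      using Dlow[OF that] m0 by (auto simp: D_def)
  qed (rule inv)
qed

lemma contour_integral_resolvent_circlepath_eq:
  fixes A :: "complex^'m^'m"
  assumes "r > 0" "R > 0" "a > 0" "a < min r R" "max r R < b"
    and nz: "\<And>\<zeta>. a \<le> cmod (\<zeta> - \<mu>) \<Longrightarrow> cmod (\<zeta> - \<mu>) \<le> b \<Longrightarrow> det (A - mat \<zeta>) \<noteq> 0"
  shows "contour_integral (circlepath \<mu> r) (\<lambda>\<zeta>. matrix_inv (A - mat \<zeta>) $ k $ q) =
         contour_integral (circlepath \<mu> R) (\<lambda>\<zeta>. matrix_inv (A - mat \<zeta>) $ k $ q)"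
proof (rule Cauchy_theorem_homotopic_loops)
  define Sa where "Sa = ball \<mu> b - cball \<mu> a"
  have inSa: "\<zeta> \<in> Sa \<longleftrightarrow> a < cmod (\<zeta> - \<mu>) \<and> cmod (\<zeta> - \<mu>) < b" for \<zeta>
    by (auto simp: Sa_def dist_norm norm_minus_commute)
  show "open Sa" unfolding Sa_def by auto
  show "(\<lambda>\<zeta>. matrix_inv (A - mat \<zeta>) $ k $ q) holomorphic_on Sa"
    by (rule holomorphic_on_matrix_inv_nth) (use nz inSa in auto)
  show "homotopic_loops Sa (circlepath \<mu> r) (circlepath \<mu> R)"
  proof (rule homotopic_loops_linear)
    fix t :: real assume t: "t \<in> {0..1}"
    define e where "e = exp (2 * complex_of_real pi * \<i> * complex_of_real t)"
    have ne: "cmod e = 1"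
      unfolding e_def by (simp add: norm_exp_i_times[of "2 * pi * t", simplified] mult.assoc)
    show "closed_segment (circlepath \<mu> r t) (circlepath \<mu> R t) \<subseteq> Sa"
    proof
      fix w assume "w \<in> closed_segment (circlepath \<mu> r t) (circlepath \<mu> R t)"
      then obtain u where u: "0 \<le> u" "u \<le> 1"
        "w = (1 - u) *\<^sub>R circlepath \<mu> r t + u *\<^sub>R circlepath \<mu> R t"
        unfolding closed_segment_def by blast
      have "w - \<mu> = complex_of_real ((1 - u) * r + u * R) * e"
        unfolding u(3) circlepath e_def by (simp add: scaleR_conv_of_real algebra_simps)
      hence "cmod (w - \<mu>) = \<bar>(1 - u) * r + u * R\<bar>" by (simp only: norm_mult ne norm_of_real mult_1_right)
      moreover have "(1 - u) * r + u * R \<in> closed_segment r R"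
        using u(1,2) by (auto simp: closed_segment_def)
      ultimately show "w \<in> Sa" unfolding inSa closed_segment_eq_real_ivl using assms by (auto split: if_splits)
    qed
  qed auto
qed auto

section \<open>Holomorphic dependence of contour integrals on a parameter\<close>

text \<open>The hypotheses of the Leibniz rule for holomorphic parameter integrals.\<close>
definition param_C1 :: "complex set \<Rightarrow> 'b::topological_space set \<Rightarrow> (complex \<Rightarrow> 'b \<Rightarrow> complex) \<Rightarrow> bool"
  where "param_C1 U T F \<longleftrightarrow> (\<exists>F'. (\<forall>x\<in>U. \<forall>t\<in>T. ((\<lambda>x. F x t) has_field_derivative F' x t) (at x)) \<and>
      continuous_on (U \<times> T) (\<lambda>p. F (fst p) (snd p)) \<and> continuous_on (U \<times> T) (\<lambda>p. F' (fst p) (snd p)))"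

lemma param_C1_const: "continuous_on T g \<Longrightarrow> param_C1 U T (\<lambda>x t. g t)"
  unfolding param_C1_def
  by (rule exI[of _ "\<lambda>x t. 0"]) (auto intro!: continuous_on_compose2[OF _ continuous_on_snd])

lemma param_C1_holomorphic:
  assumes "f holomorphic_on U" "open U"
  shows "param_C1 U T (\<lambda>x t. f x)"
  unfolding param_C1_def
proof (rule exI[of _ "\<lambda>x t. deriv f x"], intro conjI ballI)
  fix x t assume "x \<in> U"
  then show "((\<lambda>x. f x) has_field_derivative deriv f x) (at x)"
    using assms holomorphic_derivI by blast
next
  have "continuous_on U f" using assms holomorphic_on_imp_continuous_on by blast
  then show "continuous_on (U \<times> T) (\<lambda>p. f (fst p))"
    by (rule continuous_on_compose2[OF _ continuous_on_fst]) auto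
next
  have "continuous_on U (deriv f)"
    using assms holomorphic_deriv holomorphic_on_imp_continuous_on by blast
  then show "continuous_on (U \<times> T) (\<lambda>p. deriv f (fst p))"
    by (rule continuous_on_compose2[OF _ continuous_on_fst]) auto
qed

lemma param_C1_add:
  assumes "param_C1 U T F" "param_C1 U T G"
  shows "param_C1 U T (\<lambda>x t. F x t + G x t)"
proof -
  obtain F' where F: "\<forall>x\<in>U. \<forall>t\<in>T. ((\<lambda>x. F x t) has_field_derivative F' x t) (at x)"
    "continuous_on (U\<times>T) (\<lambda>p. F (fst p) (snd p))" "continuous_on (U\<times>T) (\<lambda>p. F' (fst p) (snd p))"
    using assms(1) unfolding param_C1_def by blast
  obtain G' where G: "\<forall>x\<in>U. \<forall>t\<in>T. ((\<lambda>x. G x t) has_field_derivative G' x t) (at x)"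
    "continuous_on (U\<times>T) (\<lambda>p. G (fst p) (snd p))" "continuous_on (U\<times>T) (\<lambda>p. G' (fst p) (snd p))"
    using assms(2) unfolding param_C1_def by blast
  show ?thesis unfolding param_C1_def
    by (rule exI[of _ "\<lambda>x t. F' x t + G' x t"])
       (use F G in \<open>auto intro!: derivative_intros continuous_intros\<close>)
qed

lemma param_C1_mult:
  assumes "param_C1 U T F" "param_C1 U T G"
  shows "param_C1 U T (\<lambda>x t. F x t * G x t)"
proof -
  obtain F' where F: "\<forall>x\<in>U. \<forall>t\<in>T. ((\<lambda>x. F x t) has_field_derivative F' x t) (at x)"
    "continuous_on (U\<times>T) (\<lambda>p. F (fst p) (snd p))" "continuous_on (U\<times>T) (\<lambda>p. F' (fst p) (snd p))"
    using assms(1) unfolding param_C1_def by blast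
  obtain G' where G: "\<forall>x\<in>U. \<forall>t\<in>T. ((\<lambda>x. G x t) has_field_derivative G' x t) (at x)"
    "continuous_on (U\<times>T) (\<lambda>p. G (fst p) (snd p))" "continuous_on (U\<times>T) (\<lambda>p. G' (fst p) (snd p))"
    using assms(2) unfolding param_C1_def by blast
  show ?thesis unfolding param_C1_def
    by (rule exI[of _ "\<lambda>x t. F x t * G' x t + F' x t * G x t"])
       (use F G in \<open>auto intro!: derivative_eq_intros continuous_intros\<close>)
qed

lemma param_C1_inverse:
  assumes "param_C1 U T F" "\<And>x t. x \<in> U \<Longrightarrow> t \<in> T \<Longrightarrow> F x t \<noteq> 0"
  shows "param_C1 U T (\<lambda>x t. inverse (F x t))"
proof -
  obtain F' where F: "\<forall>x\<in>U. \<forall>t\<in>T. ((\<lambda>x. F x t) has_field_derivative F' x t) (at x)"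
    "continuous_on (U\<times>T) (\<lambda>p. F (fst p) (snd p))" "continuous_on (U\<times>T) (\<lambda>p. F' (fst p) (snd p))"
    using assms(1) unfolding param_C1_def by blast
  show ?thesis unfolding param_C1_def
    by (rule exI[of _ "\<lambda>x t. - (inverse (F x t) * F' x t * inverse (F x t))"])
       (use F assms(2) in \<open>auto intro!: derivative_eq_intros continuous_intros\<close>)
qed

lemma param_C1_diff:
  assumes "param_C1 U T F" "param_C1 U T G"
  shows "param_C1 U T (\<lambda>x t. F x t - G x t)"
  using param_C1_add[OF assms(1) param_C1_mult[OF param_C1_const[of T "\<lambda>t. -1"] assms(2)]]
  by simp

lemma param_C1_divide:
  assumes "param_C1 U T F" "param_C1 U T G" "\<And>x t. x \<in> U \<Longrightarrow> t \<in> T \<Longrightarrow> G x t \<noteq> 0"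
  shows "param_C1 U T (\<lambda>x t. F x t / G x t)"
  using param_C1_mult[OF assms(1) param_C1_inverse[OF assms(2,3)]] by (simp add: field_simps)

lemma param_C1_sum:
  assumes "finite I" "\<And>i. i \<in> I \<Longrightarrow> param_C1 U T (F i)"
  shows "param_C1 U T (\<lambda>x t. \<Sum>i\<in>I. F i x t)"
  using assms
proof (induction I rule: finite_induct)
  case empty
  then show ?case using param_C1_const[of T "\<lambda>t. 0"] by simp
next
  case (insert a I)
  then show ?case using param_C1_add[of U T "F a" "\<lambda>x t. \<Sum>i\<in>I. F i x t"] by simp
qed

lemma param_C1_prod:
  assumes "finite I" "\<And>i. i \<in> I \<Longrightarrow> param_C1 U T (F i)"
  shows "param_C1 U T (\<lambda>x t. \<Prod>i\<in>I. F i x t)"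
  using assms
proof (induction I rule: finite_induct)
  case empty
  then show ?case using param_C1_const[of T "\<lambda>t. 1"] by simp
next
  case (insert a I)
  then show ?case using param_C1_mult[of U T "F a" "\<lambda>x t. \<Prod>i\<in>I. F i x t"] by simp
qed

lemma param_C1_if_const:
  "param_C1 U T F \<Longrightarrow> param_C1 U T G \<Longrightarrow> param_C1 U T (\<lambda>x t. if c then F x t else G x t)"
  by (cases c) auto

lemma param_C1_det:
  fixes M :: "complex \<Rightarrow> 'b::topological_space \<Rightarrow> complex^'m^'m"
  assumes "\<And>i j. param_C1 U T (\<lambda>x t. M x t $ i $ j)"
  shows "param_C1 U T (\<lambda>x t. det (M x t))"
  unfolding det_def
  by (intro param_C1_sum param_C1_mult param_C1_prod param_C1_const assms) (auto intro: continuous_intros)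

lemma holomorphic_on_param_integral:
  assumes "param_C1 U {0..1} F" "open U" "convex U"
  shows "(\<lambda>x. integral {0..1::real} (F x)) holomorphic_on U"
proof -
  obtain F' where F: "\<forall>x\<in>U. \<forall>t\<in>{0..1}. ((\<lambda>x. F x t) has_field_derivative F' x t) (at x)"
    "continuous_on (U\<times>{0..1}) (\<lambda>p. F (fst p) (snd p))" "continuous_on (U\<times>{0..1}) (\<lambda>p. F' (fst p) (snd p))"
    using assms(1) unfolding param_C1_def by blast
  have "(\<lambda>x. integral (cbox 0 1) (F x)) holomorphic_on U"
  proof (rule leibniz_rule_holomorphic[where fx = F'])
    fix x t assume "x \<in> U" "t \<in> cbox (0::real) 1"
    thus "((\<lambda>x. F x t) has_field_derivative F' x t) (at x within U)"
      using F(1) by (auto intro: has_field_derivative_at_within)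
  next
    fix x assume x: "x \<in> U"
    have "continuous_on {0..1} (\<lambda>t. F (fst (x, t)) (snd (x, t)))"
      by (rule continuous_on_compose2[OF F(2)]) (use x in \<open>auto intro!: continuous_intros\<close>)
    thus "F x integrable_on cbox 0 1" by (simp add: integrable_continuous_interval)
  next
    show "continuous_on (U \<times> cbox 0 1) (\<lambda>(x, t). F' x t)"
      using F(3) by (simp add: case_prod_beta')
  qed (use assms in auto)
  thus ?thesis by simp
qed

lemma holomorphic_on_contour_integral_resolvent:
  fixes Uf :: "complex \<Rightarrow> complex^'m^'m"
  assumes S: "open S" "convex S" and hol: "\<And>i j. (\<lambda>z. Uf z $ i $ j) holomorphic_on S"
    and R: "R > 0" and nz: "\<And>z \<zeta>. z \<in> S \<Longrightarrow> \<zeta> \<in> sphere \<mu> R \<Longrightarrow> det (Uf z - mat \<zeta>) \<noteq> 0"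
  shows "(\<lambda>z. contour_integral (circlepath \<mu> R) (\<lambda>\<zeta>. matrix_inv (Uf z - mat \<zeta>) $ k $ q)) holomorphic_on S"
proof -
  define \<gamma> where "\<gamma> = circlepath \<mu> R"
  define d where "d t = complex_of_real (2 * pi) * \<i> * complex_of_real R *
    exp (2 * complex_of_real pi * \<i> * complex_of_real t)" for t :: real
  define F where "F z t = det (replace_column_axis (Uf z - mat (\<gamma> t)) k q) / det (Uf z - mat (\<gamma> t)) * d t"
    for z t
  have \<gamma>S: "\<gamma> t \<in> sphere \<mu> R" if "t \<in> {0..1}" for t
    using that R path_image_circlepath_nonneg[of R \<mu>] unfolding \<gamma>_def path_image_def by auto
  have cont\<gamma>: "continuous_on {0..1} \<gamma>" unfolding \<gamma>_def circlepath by (intro continuous_intros)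
  have ent: "param_C1 S {0..1} (\<lambda>z t. (Uf z - mat (\<gamma> t)) $ i $ j)" for i j
  proof -
    have "param_C1 S {0..1} (\<lambda>z t. Uf z $ i $ j - (if i = j then \<gamma> t else 0))"
      by (intro param_C1_diff param_C1_holomorphic hol S param_C1_const continuous_on_if_const
          cont\<gamma> continuous_intros)
    thus ?thesis by (simp add: mat_def)
  qed
  have ent_repl: "param_C1 S {0..1} (\<lambda>z t. replace_column_axis (Uf z - mat (\<gamma> t)) k q $ i $ j)"
    for i j
    unfolding replace_column_axis_nth by (intro param_C1_if_const param_C1_const continuous_intros ent)
  have "param_C1 S {0..1} F"
    unfolding F_def
    by (intro param_C1_mult param_C1_divide param_C1_det param_C1_const ent ent_repl)
       (use nz \<gamma>S in \<open>auto simp: d_def intro!: continuous_intros\<close>)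
  from holomorphic_on_param_integral[OF this S]
  show ?thesis
  proof (rule holomorphic_transform)
    fix z assume z: "z \<in> S"
    show "integral {0..1} (F z) =
          contour_integral (circlepath \<mu> R) (\<lambda>\<zeta>. matrix_inv (Uf z - mat \<zeta>) $ k $ q)"
      unfolding contour_integral_integral \<gamma>_def[symmetric]
    proof (rule integral_cong)
      fix t :: real assume t: "t \<in> {0..1}"
      show "F z t = matrix_inv (Uf z - mat (\<gamma> t)) $ k $ q * vector_derivative \<gamma> (at t)"
        unfolding F_def using matrix_inv_nth_cramer[OF nz[OF z \<gamma>S[OF t]]]
        by (simp add: \<gamma>_def vector_derivative_circlepath d_def)
    qed
  qed
qed

section \<open>The walk operator of a perturbed Google matrix\<close>

definition walk_matrix :: "complex^'n^'n \<Rightarrow> complex^('n \<times> 'n)^('n \<times> 'n)" where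
  "walk_matrix M = swap_op ** (2 *\<^sub>R Bop M - mat 1)"

definition of_real_matrix :: "real^'n^'m \<Rightarrow> complex^'n^'m" where
  "of_real_matrix G = (\<chi> i j. complex_of_real (G $ i $ j))"

definition geom_bounded :: "real \<Rightarrow> real \<Rightarrow> (nat \<Rightarrow> complex^'n^'n) \<Rightarrow> bool" where
  "geom_bounded A0 B0 Gl \<longleftrightarrow> (\<forall>l\<ge>1. opnorm (Gl l) \<le> A0 * B0 ^ (l - 1))"

lemma Uop_eq_walk_matrix: "Uop G Gl z = walk_matrix (Gpert G Gl z)"
  by (simp add: Uop_def walk_matrix_def)

lemma Gpert_at_0: "Gpert G Gl 0 = of_real_matrix G"
  by (simp add: Gpert_def of_real_matrix_def)

lemma Gpert_nth: "Gpert G Gl z $ i $ j = complex_of_real (G $ i $ j) + (\<Sum>l. z ^ Suc l * Gl (Suc l) $ i $ j)"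
  by (simp add: Gpert_def)

lemma walk_matrix_nth:
  fixes M :: "complex^'n^'n" and p q :: "'n \<times> 'n"
  shows "walk_matrix M $ p $ q =
     2 * (if snd p = fst q then csqrt (M $ snd p $ fst p) * csqrt (M $ fst q $ snd q) else 0)
     - (if (snd p, fst p) = q then 1 else 0)"
proof -
  have swap: "(swap_op ** X) $ p $ q = X $ (snd p, fst p) $ q" for X :: "complex^('n \<times> 'n)^('n \<times> 'n)"
  proof -
    have "swap_op $ p $ k = (if k = (snd p, fst p) then 1 else 0)" for k :: "'n \<times> 'n"
      by (cases p; cases k) (auto simp: swap_op_def)
    then show ?thesis by (simp add: matrix_matrix_mult_def if_distrib[where f="\<lambda>x. x * _"] cong: if_cong)
  qed
  have "Bop M $ k $ q = (if fst k = fst q then csqrt (M $ fst k $ snd k) * csqrt (M $ fst q $ snd q) else 0)"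
    for k :: "'n \<times> 'n"
    unfolding Bop_def psi_def vec_lambda_beta
    by (simp add: if_distrib[where f="\<lambda>x. x * _"] if_distrib[where f="\<lambda>x. _ * x"] cong: if_cong)
  then show ?thesis by (simp add: walk_matrix_def swap mat_def scaleR_conv_of_real)
qed

lemma tendsto_if_const:
  "(f \<longlongrightarrow> a) F \<Longrightarrow> (g \<longlongrightarrow> b) F \<Longrightarrow> ((\<lambda>x. if c then f x else g x) \<longlongrightarrow> (if c then a else b)) F"
  by (cases c) auto

text \<open>Continuity only needs the principal square root to be continuous at the (positive)
  entries of \<open>G\<close>.\<close>
lemma isCont_walk_matrix:
  fixes G :: "real^'n^'n"
  assumes pos: "\<And>i j. G $ i $ j > 0"
  shows "isCont walk_matrix (of_real_matrix G)"
proof -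
  have nn: "of_real_matrix G $ a $ b \<notin> \<real>\<^sub>\<le>\<^sub>0" for a b
    using pos[of a b] by (simp add: of_real_matrix_def)
  have cs: "((\<lambda>M. csqrt (M $ a $ b)) \<longlongrightarrow> csqrt (of_real_matrix G $ a $ b)) (at (of_real_matrix G))" for a b
    by (rule isCont_tendsto_compose[OF continuous_at_csqrt[OF nn]]) (intro tendsto_vec_nth tendsto_ident_at)
  show ?thesis unfolding isCont_def
    by (intro vec_tendstoI, unfold walk_matrix_nth)
       (intro tendsto_diff tendsto_mult tendsto_const tendsto_if_const cs)
qed

lemma norm_Gl_nth_le: "geom_bounded A0 B0 Gl \<Longrightarrow> cmod (Gl (Suc l) $ i $ j) \<le> A0 * B0 ^ l"
  unfolding geom_bounded_def using norm_entry_le_opnorm[of "Gl (Suc l)" i j]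
  by (metis diff_Suc_1 le_add1 order_trans plus_1_eq_Suc)

lemma Gpert_series_bound:
  fixes Gl :: "nat \<Rightarrow> complex^'n^'n"
  assumes "geom_bounded A0 B0 Gl" "B0 > 0" "A0 > 0" "cmod z < 1 / B0"
  shows "summable (\<lambda>l. z ^ Suc l * Gl (Suc l) $ i $ j)"
    and "cmod (\<Sum>l. z ^ Suc l * Gl (Suc l) $ i $ j) \<le> A0 * cmod z / (1 - B0 * cmod z)"
proof -
  define g where "g l = A0 * cmod z * (B0 * cmod z) ^ l" for l
  have q: "norm (B0 * cmod z) < 1" using assms by (simp add: field_simps)
  have sg: "summable g" unfolding g_def using q by (intro summable_mult summable_geometric)
  have sumg: "suminf g = A0 * cmod z / (1 - B0 * cmod z)"
    unfolding g_def using suminf_mult[OF summable_geometric[OF q], of "A0 * cmod z"] suminf_geometric[OF q]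
    by simp
  have b: "norm (z ^ Suc l * Gl (Suc l) $ i $ j) \<le> g l" for l
  proof -
    have "norm (z ^ Suc l * Gl (Suc l) $ i $ j) = cmod z ^ Suc l * cmod (Gl (Suc l) $ i $ j)"
      by (simp add: norm_mult norm_power)
    also have "\<dots> \<le> cmod z ^ Suc l * (A0 * B0 ^ l)"
      by (intro mult_left_mono norm_Gl_nth_le assms) auto
    also have "\<dots> = g l" by (simp add: g_def power_mult_distrib)
    finally show ?thesis .
  qed
  show "summable (\<lambda>l. z ^ Suc l * Gl (Suc l) $ i $ j)"
    by (rule summable_comparison_test'[OF sg b])
  show "cmod (\<Sum>l. z ^ Suc l * Gl (Suc l) $ i $ j) \<le> A0 * cmod z / (1 - B0 * cmod z)"
    using norm_suminf_le[OF b sg] sumg by simp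
qed

lemma norm_Gpert_minus_le:
  fixes Gl :: "nat \<Rightarrow> complex^'n^'n"
  assumes "geom_bounded A0 B0 Gl" "B0 > 0" "A0 > 0" "cmod z \<le> 1 / (2 * B0)"
  shows "norm (Gpert G Gl z - of_real_matrix G) \<le> real CARD('n) * real CARD('n) * (2 * A0 * cmod z)"
proof -
  have z1: "cmod z < 1 / B0" using assms(2,4) by (simp add: field_simps)
  have d: "1/2 \<le> 1 - B0 * cmod z" using assms by (simp add: field_simps)
  have e: "cmod ((Gpert G Gl z - of_real_matrix G) $ i $ j) \<le> 2 * A0 * cmod z" for i j
  proof -
    have "cmod ((Gpert G Gl z - of_real_matrix G) $ i $ j) = cmod (\<Sum>l. z ^ Suc l * Gl (Suc l) $ i $ j)"
      by (simp add: Gpert_nth of_real_matrix_def)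
    also have "\<dots> \<le> A0 * cmod z / (1 - B0 * cmod z)"
      by (rule Gpert_series_bound(2)[OF assms(1-3) z1])
    also have "\<dots> \<le> 2 * A0 * cmod z"
    proof -
      have "A0 * cmod z \<le> (2 * A0 * cmod z) * (1 - B0 * cmod z)"
        using mult_left_mono[OF d, of "2 * A0 * cmod z"] assms(3) by simp
      moreover have "1 - B0 * cmod z > 0" using d by linarith
      ultimately show ?thesis by (simp add: pos_divide_le_eq)
    qed
    finally show ?thesis .
  qed
  have "norm (Gpert G Gl z - of_real_matrix G)
        \<le> (\<Sum>i\<in>UNIV. \<Sum>j\<in>UNIV. cmod ((Gpert G Gl z - of_real_matrix G) $ i $ j))"
    by (rule norm_matrix_le_sum_norm_entries)
  also have "\<dots> \<le> (\<Sum>i\<in>(UNIV::'n set). \<Sum>j\<in>(UNIV::'n set). 2 * A0 * cmod z)"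
    by (intro sum_mono e)
  finally show ?thesis by simp
qed

lemma holomorphic_on_Gpert_nth:
  fixes Gl :: "nat \<Rightarrow> complex^'n^'n"
  assumes "geom_bounded A0 B0 Gl" "B0 > 0" "A0 > 0"
  shows "(\<lambda>z. Gpert G Gl z $ i $ j) holomorphic_on ball 0 (1 / B0)"
proof (rule power_series_holomorphic)
  fix w :: complex assume "w \<in> ball 0 (1 / B0)"
  hence w: "cmod w < 1 / B0" by simp
  define f where "f n = (if n = 0 then complex_of_real (G $ i $ j) else Gl n $ i $ j) * w ^ n" for n
  have "(\<lambda>n. f (Suc n)) sums (\<Sum>l. w ^ Suc l * Gl (Suc l) $ i $ j)"
    unfolding f_def using summable_sums[OF Gpert_series_bound(1)[OF assms w, of i j]]
    by (simp add: mult.commute)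
  hence "f sums ((\<Sum>l. w ^ Suc l * Gl (Suc l) $ i $ j) + f 0)"
    by (simp add: sums_Suc_iff)
  thus "(\<lambda>n. (if n = 0 then complex_of_real (G $ i $ j) else Gl n $ i $ j) * (w - 0) ^ n)
          sums Gpert G Gl w $ i $ j"
    by (simp add: f_def[abs_def] Gpert_nth add.commute)
qed

lemma holomorphic_on_Uop_nth:
  assumes "\<And>i j. (\<lambda>z. Gpert G Gl z $ i $ j) holomorphic_on S"
    and "\<And>z i j. z \<in> S \<Longrightarrow> Gpert G Gl z $ i $ j \<notin> \<real>\<^sub>\<le>\<^sub>0"
  shows "(\<lambda>z. Uop G Gl z $ p $ q) holomorphic_on S"
  unfolding Uop_eq_walk_matrix walk_matrix_nth
  by (intro holomorphic_intros holomorphic_on_if_const holomorphic_on_csqrt' assms)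

lemma Uop_near_uniform:
  fixes G :: "real^'n^'n"
  assumes pos: "\<And>i j. G $ i $ j > 0" and A0: "A0 > 0" and B0: "B0 > 0" and "\<epsilon> > 0"
  obtains \<rho> where "\<rho> > 0" "\<rho> \<le> 1 / (2 * B0)"
    "\<And>Gl z. geom_bounded A0 B0 Gl \<Longrightarrow> cmod z < \<rho> \<Longrightarrow> norm (Uop G Gl z - Uop G Gl 0) < \<epsilon>"
    "\<And>Gl z i j. geom_bounded A0 B0 Gl \<Longrightarrow> cmod z < \<rho> \<Longrightarrow> Gpert G Gl z $ i $ j \<notin> \<real>\<^sub>\<le>\<^sub>0"
proof -
  obtain \<delta> where \<delta>: "\<delta> > 0"
    "\<And>M. norm (M - of_real_matrix G) < \<delta> \<Longrightarrow> norm (walk_matrix M - walk_matrix (of_real_matrix G)) < \<epsilon>"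
    using isCont_walk_matrix[OF pos] \<open>\<epsilon> > 0\<close> unfolding continuous_at_eps_delta dist_norm by blast
  define g0 where "g0 = Min (range (\<lambda>p. G $ fst p $ snd p))"
  have g0: "g0 > 0" "\<And>i j. g0 \<le> G $ i $ j"
    using pos by (auto simp: g0_def intro!: Min_le image_eqI[of _ _ "(i, j)" for i j])
  define c where "c = real CARD('n) * real CARD('n) * (2 * A0)"
  have c0: "c > 0" using A0 by (simp add: c_def)
  define \<rho> where "\<rho> = min (1 / (2 * B0)) (min \<delta> g0 / c)"
  have near: "norm (Gpert G Gl z - of_real_matrix G) < min \<delta> g0"
    if adm: "geom_bounded A0 B0 Gl" and z: "cmod z < \<rho>" for Gl z
  proof -
    have "norm (Gpert G Gl z - of_real_matrix G) \<le> c * cmod z"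
      using norm_Gpert_minus_le[OF adm B0 A0, of z G] z by (simp add: c_def \<rho>_def mult.assoc)
    also have "\<dots> < min \<delta> g0"
      using z c0 by (simp add: \<rho>_def pos_less_divide_eq mult.commute)
    finally show ?thesis .
  qed
  show ?thesis
  proof (rule that[of \<rho>])
    show "\<rho> > 0" using B0 \<delta> g0 c0 by (simp add: \<rho>_def)
    show "\<rho> \<le> 1 / (2 * B0)" by (simp add: \<rho>_def)
    show "norm (Uop G Gl z - Uop G Gl 0) < \<epsilon>" if "geom_bounded A0 B0 Gl" "cmod z < \<rho>" for Gl z
      using \<delta>(2) near[OF that] by (simp add: Uop_eq_walk_matrix Gpert_at_0)
    show "Gpert G Gl z $ i $ j \<notin> \<real>\<^sub>\<le>\<^sub>0" if "geom_bounded A0 B0 Gl" "cmod z < \<rho>" for Gl z i j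
    proof
      assume np: "Gpert G Gl z $ i $ j \<in> \<real>\<^sub>\<le>\<^sub>0"
      have "cmod ((Gpert G Gl z - of_real_matrix G) $ i $ j) < g0"
        using le_less_trans[OF norm_entry_le_norm_matrix near[OF that]] by simp
      hence "Re (Gpert G Gl z $ i $ j) > G $ i $ j - g0"
        using abs_Re_le_cmod[of "(Gpert G Gl z - of_real_matrix G) $ i $ j"]
        by (simp add: of_real_matrix_def)
      moreover have "Re (Gpert G Gl z $ i $ j) \<le> 0" using np by (simp add: complex_nonpos_Reals_iff)
      ultimately show False using g0(2)[of i j] by linarith
    qed
  qed
qed

lemma tendsto_Uop_at_0:
  fixes G :: "real^'n^'n"
  assumes "\<And>i j. G $ i $ j > 0" "A0 > 0" "B0 > 0" "geom_bounded A0 B0 Gl"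
  shows "(Uop G Gl \<longlongrightarrow> Uop G Gl 0) (nhds 0)"
  unfolding tendsto_iff
proof (intro allI impI)
  fix \<epsilon> :: real assume "\<epsilon> > 0"
  then obtain \<rho> where "\<rho> > 0" "\<And>z. cmod z < \<rho> \<Longrightarrow> norm (Uop G Gl z - Uop G Gl 0) < \<epsilon>"
    using Uop_near_uniform[OF assms(1-3)] assms(4) by metis
  then show "\<forall>\<^sub>F z in nhds 0. dist (Uop G Gl z) (Uop G Gl 0) < \<epsilon>"
    unfolding eventually_nhds_metric by (auto simp: dist_norm)
qed

section \<open>Taylor coefficients of the Riesz projection\<close>

lemma norm_riesz_integral_le:
  fixes A :: "complex^'m^'m"
  assumes "R > 0" "C \<ge> 0"
    and nz: "\<And>\<zeta>. \<zeta> \<in> sphere \<mu> R \<Longrightarrow> det (A - mat \<zeta>) \<noteq> 0"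
    and bound: "\<And>\<zeta>. \<zeta> \<in> sphere \<mu> R \<Longrightarrow> cmod (matrix_inv (A - mat \<zeta>) $ k $ q) \<le> C"
  shows "cmod (- (1 / (2 * pi * \<i>)) *
           contour_integral (circlepath \<mu> R) (\<lambda>\<zeta>. matrix_inv (A - mat \<zeta>) $ k $ q)) \<le> R * C"
proof -
  let ?f = "\<lambda>\<zeta>. matrix_inv (A - mat \<zeta>) $ k $ q"
  have "continuous_on (path_image (circlepath \<mu> R)) ?f"
    unfolding path_image_circlepath_nonneg[OF less_imp_le[OF \<open>R > 0\<close>]]
    by (rule continuous_on_matrix_inv_nth) (use nz in blast)
  then have "(?f has_contour_integral contour_integral (circlepath \<mu> R) ?f) (circlepath \<mu> R)"
    by (intro has_contour_integral_integral contour_integrable_continuous_circlepath)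
  then have "cmod (contour_integral (circlepath \<mu> R) ?f) \<le> C * (2 * pi * R)"
    by (rule has_contour_integral_bound_circlepath)
       (use assms in \<open>auto simp: dist_norm norm_minus_commute\<close>)
  then show ?thesis by (simp add: norm_mult norm_divide field_simps)
qed

text \<open>Cauchy's theorem on an annulus free of eigenvalues of \<open>U\<^sub>f(0)\<close>, which stays free of
  eigenvalues of \<open>U\<^sub>f(z)\<close> for small \<open>z\<close>; \<open>\<mu>\<close> itself need not be an eigenvalue.\<close>
lemma eventually_contour_integral_resolvent_eq:
  fixes Uf :: "complex \<Rightarrow> complex^'m^'m"
  assumes lim: "(Uf \<longlongrightarrow> Uf 0) (nhds 0)" and "r > 0" "R > 0"
    and sep: "\<And>\<mu>'. is_eigenvalue (Uf 0) \<mu>' \<Longrightarrow> \<mu>' \<noteq> \<mu> \<Longrightarrow> max r R < cmod (\<mu>' - \<mu>)"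
  shows "\<forall>\<^sub>F z in nhds 0. \<forall>k q.
           contour_integral (circlepath \<mu> r) (\<lambda>\<zeta>. matrix_inv (Uf z - mat \<zeta>) $ k $ q) =
           contour_integral (circlepath \<mu> R) (\<lambda>\<zeta>. matrix_inv (Uf z - mat \<zeta>) $ k $ q)"
proof -
  define a where "a = min r R / 2"
  have a: "a > 0" "a < min r R" using assms(2,3) by (auto simp: a_def)
  define Oth where "Oth = {\<mu>'. is_eigenvalue (Uf 0) \<mu>'} - {\<mu>}"
  have finO: "finite Oth" unfolding Oth_def using finite_eigenvalues by blast
  define d where "d = Min (insert (max r R + 1) ((\<lambda>\<mu>'. cmod (\<mu>' - \<mu>)) ` Oth))"
  have "d \<in> insert (max r R + 1) ((\<lambda>\<mu>'. cmod (\<mu>' - \<mu>)) ` Oth)"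
    unfolding d_def using finO by (intro Min_in) auto
  hence d_gt: "d > max r R" using sep by (auto simp: Oth_def)
  have d_le: "d \<le> cmod (\<mu>' - \<mu>)" if "\<mu>' \<in> Oth" for \<mu>'
    unfolding d_def using finO that by (intro Min_le) auto
  define b where "b = (max r R + d) / 2"
  have b: "max r R < b" "b < d" using d_gt by (auto simp: b_def)
  define K where "K = cball \<mu> b - ball \<mu> a"
  have inK: "\<zeta> \<in> K \<longleftrightarrow> a \<le> cmod (\<zeta> - \<mu>) \<and> cmod (\<zeta> - \<mu>) \<le> b" for \<zeta>
    by (auto simp: K_def dist_norm norm_minus_commute)
  have "det (Uf 0 - mat \<zeta>) \<noteq> 0" if "\<zeta> \<in> K" for \<zeta>
  proof
    assume "det (Uf 0 - mat \<zeta>) = 0"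
    moreover have "\<zeta> \<noteq> \<mu>" using that a inK by auto
    ultimately have "\<zeta> \<in> Oth" by (simp add: Oth_def is_eigenvalue_iff_det)
    thus False using d_le that b inK by fastforce
  qed
  moreover have "compact K" unfolding K_def by (intro compact_diff) auto
  ultimately obtain \<epsilon> where "\<epsilon> > 0"
    and nz: "\<And>E \<zeta>. norm E \<le> \<epsilon> \<Longrightarrow> \<zeta> \<in> K \<Longrightarrow> det (Uf 0 + E - mat \<zeta>) \<noteq> 0"
    using resolvent_perturbation_bound by metis
  from lim \<open>\<epsilon> > 0\<close> have "\<forall>\<^sub>F z in nhds 0. norm (Uf z - Uf 0) < \<epsilon>"
    unfolding tendsto_iff dist_norm by blast
  then show ?thesis
  proof (rule eventually_mono, intro allI)
    fix z k q assume "norm (Uf z - Uf 0) < \<epsilon>"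
    then have "det (Uf z - mat \<zeta>) \<noteq> 0" if "\<zeta> \<in> K" for \<zeta>
      using nz[of "Uf z - Uf 0" \<zeta>] that by simp
    then show "contour_integral (circlepath \<mu> r) (\<lambda>\<zeta>. matrix_inv (Uf z - mat \<zeta>) $ k $ q) =
               contour_integral (circlepath \<mu> R) (\<lambda>\<zeta>. matrix_inv (Uf z - mat \<zeta>) $ k $ q)"
      using assms(2,3) a b inK by (intro contour_integral_resolvent_circlepath_eq) auto
  qed
qed

text \<open>The constants depend only on \<open>G\<close>, \<open>A\<^sub>0\<close> and \<open>B\<^sub>0\<close>: \<open>R\<close> comes from the spectrum of
  \<open>U(0)\<close>, which is the same for every perturbation.\<close>
lemma Phat_uniformly_bounded:
  fixes G :: "real^'n^'n"
  assumes pos: "\<And>i j. G $ i $ j > 0" and A0: "A0 > 0" and B0: "B0 > 0"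
  obtains R \<rho> K where "R > 0" "\<rho> > 0" "K > 0"
    "\<And>\<mu> \<mu>'. is_eigenvalue (walk_matrix (of_real_matrix G)) \<mu> \<Longrightarrow>
       is_eigenvalue (walk_matrix (of_real_matrix G)) \<mu>' \<Longrightarrow> \<mu> \<noteq> \<mu>' \<Longrightarrow> R < cmod (\<mu>' - \<mu>)"
    "\<And>Gl \<mu> p q. geom_bounded A0 B0 Gl \<Longrightarrow> is_eigenvalue (walk_matrix (of_real_matrix G)) \<mu> \<Longrightarrow>
       (\<lambda>z. Phat G Gl \<mu> R z $ p $ q) holomorphic_on ball 0 \<rho>"
    "\<And>Gl \<mu> p q z. geom_bounded A0 B0 Gl \<Longrightarrow> is_eigenvalue (walk_matrix (of_real_matrix G)) \<mu> \<Longrightarrow>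
       z \<in> ball 0 \<rho> \<Longrightarrow> cmod (Phat G Gl \<mu> R z $ p $ q) \<le> K"
proof -
  define U0 where "U0 = walk_matrix (of_real_matrix G)"
  have U0: "Uop G Gl 0 = U0" for Gl by (simp add: Uop_eq_walk_matrix Gpert_at_0 U0_def)
  obtain R where R: "R > 0"
    and sep: "\<And>\<mu> \<mu>'. is_eigenvalue U0 \<mu> \<Longrightarrow> is_eigenvalue U0 \<mu>' \<Longrightarrow> \<mu> \<noteq> \<mu>' \<Longrightarrow> R < cmod (\<mu>' - \<mu>)"
    using eigenvalues_separated by blast
  define K where "K = (\<Union>\<mu>\<in>{\<mu>. is_eigenvalue U0 \<mu>}. sphere \<mu> R)"
  have "compact K" unfolding K_def using finite_eigenvalues by (intro compact_UN) auto
  moreover have "det (U0 - mat \<zeta>) \<noteq> 0" if "\<zeta> \<in> K" for \<zeta>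
  proof
    assume "det (U0 - mat \<zeta>) = 0"
    moreover obtain \<mu> where "is_eigenvalue U0 \<mu>" "cmod (\<zeta> - \<mu>) = R"
      using \<open>\<zeta> \<in> K\<close> by (auto simp: K_def dist_norm norm_minus_commute)
    ultimately show False using sep[of \<mu> \<zeta>] R by (auto simp: is_eigenvalue_iff_det)
  qed
  ultimately obtain \<epsilon> C where "\<epsilon> > 0"
    and nzK: "\<And>E \<zeta>. norm E \<le> \<epsilon> \<Longrightarrow> \<zeta> \<in> K \<Longrightarrow> det (U0 + E - mat \<zeta>) \<noteq> 0"
    and invK: "\<And>E \<zeta> k q. norm E \<le> \<epsilon> \<Longrightarrow> \<zeta> \<in> K \<Longrightarrow> cmod (matrix_inv (U0 + E - mat \<zeta>) $ k $ q) \<le> C"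
    using resolvent_perturbation_bound by blast
  obtain \<rho> where "\<rho> > 0" "\<rho> \<le> 1 / (2 * B0)"
    and near: "\<And>Gl z. geom_bounded A0 B0 Gl \<Longrightarrow> cmod z < \<rho> \<Longrightarrow> norm (Uop G Gl z - Uop G Gl 0) < \<epsilon>"
    and nonpos: "\<And>Gl z i j. geom_bounded A0 B0 Gl \<Longrightarrow> cmod z < \<rho> \<Longrightarrow> Gpert G Gl z $ i $ j \<notin> \<real>\<^sub>\<le>\<^sub>0"
    using Uop_near_uniform[OF pos A0 B0 \<open>\<epsilon> > 0\<close>] by blast
  have resolvent: "det (Uop G Gl z - mat \<zeta>) \<noteq> 0 \<and> cmod (matrix_inv (Uop G Gl z - mat \<zeta>) $ k $ q) \<le> C"
    if "geom_bounded A0 B0 Gl" "is_eigenvalue U0 \<mu>" "z \<in> ball 0 \<rho>" "\<zeta> \<in> sphere \<mu> R" for Gl \<mu> z \<zeta> k q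
  proof -
    have "norm (Uop G Gl z - U0) \<le> \<epsilon>" using near[of Gl z] that(1,3) by (simp add: U0)
    moreover have "\<zeta> \<in> K" using that(2,4) by (auto simp: K_def)
    ultimately show ?thesis using nzK invK by fastforce
  qed
  show ?thesis
  proof (rule that[of R \<rho> "R * max C 0 + 1"])
    fix Gl :: "nat \<Rightarrow> complex^'n^'n" and \<mu> p q
    assume adm: "geom_bounded A0 B0 Gl" and "is_eigenvalue (walk_matrix (of_real_matrix G)) \<mu>"
    then have \<mu>: "is_eigenvalue U0 \<mu>" by (simp add: U0_def)
    have sub: "ball 0 \<rho> \<subseteq> ball (0::complex) (1 / B0)"
      using \<open>\<rho> \<le> 1 / (2 * B0)\<close> B0 by (intro subset_ball) (simp add: field_simps)
    have "(\<lambda>z. Uop G Gl z $ i $ j) holomorphic_on ball 0 \<rho>" for i j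
      by (intro holomorphic_on_Uop_nth holomorphic_on_subset[OF holomorphic_on_Gpert_nth[OF adm B0 A0] sub])
         (use nonpos[OF adm] in auto)
    then show "(\<lambda>z. Phat G Gl \<mu> R z $ p $ q) holomorphic_on ball 0 \<rho>"
      unfolding Phat_def vec_lambda_beta using resolvent[OF adm \<mu>] R
      by (intro holomorphic_intros holomorphic_on_contour_integral_resolvent) auto
    fix z :: complex assume "z \<in> ball 0 \<rho>"
    have "cmod (Phat G Gl \<mu> R z $ p $ q) \<le> R * max C 0"
      unfolding Phat_def vec_lambda_beta
    proof (rule norm_riesz_integral_le)
      fix \<zeta> assume "\<zeta> \<in> sphere \<mu> R"
      then show "det (Uop G Gl z - mat \<zeta>) \<noteq> 0" "cmod (matrix_inv (Uop G Gl z - mat \<zeta>) $ p $ q) \<le> max C 0"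
        using resolvent[OF adm \<mu> \<open>z \<in> ball 0 \<rho>\<close>, of \<zeta> p q] by auto
    qed (use R in auto)
    then show "cmod (Phat G Gl \<mu> R z $ p $ q) \<le> R * max C 0 + 1" by simp
  qed (use R \<open>\<rho> > 0\<close> sep in \<open>auto simp: U0_def intro!: add_nonneg_pos\<close>)
qed

lemma norm_higher_deriv_div_fact_le:
  assumes hol: "f holomorphic_on ball w \<rho>'" and bound: "\<And>z. z \<in> ball w \<rho>' \<Longrightarrow> cmod (f z) \<le> K"
    and ev: "\<forall>\<^sub>F z in nhds w. g z = f z" and "0 < \<rho>" "\<rho> < \<rho>'"
  shows "cmod ((deriv ^^ n) g w / fact n) \<le> K / \<rho> ^ n"
proof -
  have sub: "cball w \<rho> \<subseteq> ball w \<rho>'" using \<open>\<rho> < \<rho>'\<close> by (simp add: cball_subset_ball_iff)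
  have "(deriv ^^ n) g w = (deriv ^^ n) f w" by (rule higher_deriv_cong_ev[OF ev refl])
  moreover have "cmod ((deriv ^^ n) f w) \<le> fact n * K / \<rho> ^ n"
  proof (rule Cauchy_inequality)
    show "f holomorphic_on ball w \<rho>" by (rule holomorphic_on_subset[OF hol]) (use sub in auto)
    show "continuous_on (cball w \<rho>) f"
      by (rule holomorphic_on_imp_continuous_on[OF holomorphic_on_subset[OF hol sub]])
    show "cmod (f x) \<le> K" if "cmod (w - x) = \<rho>" for x
      using bound sub that by (auto simp: dist_norm)
  qed fact
  ultimately show ?thesis by (simp add: norm_divide field_simps)
qed

lemma opnorm_Phat_coeff_le:
  fixes G :: "real^'n^'n"
  assumes pos: "\<And>i j. G $ i $ j > 0" and "A0 > 0" "B0 > 0" and adm: "geom_bounded A0 B0 Gl"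
    and "R > 0" "r > 0" "\<rho> > 0"
    and sep: "\<And>\<mu>'. is_eigenvalue (Uop G Gl 0) \<mu>' \<Longrightarrow> \<mu>' \<noteq> \<mu> \<Longrightarrow> max r R < cmod (\<mu>' - \<mu>)"
    and hol: "\<And>p q. (\<lambda>z. Phat G Gl \<mu> R z $ p $ q) holomorphic_on ball 0 \<rho>"
    and bound: "\<And>p q z. z \<in> ball 0 \<rho> \<Longrightarrow> cmod (Phat G Gl \<mu> R z $ p $ q) \<le> K"
  shows "opnorm (Phat_coeff G Gl \<mu> r n) \<le> real CARD('n \<times> 'n) * real CARD('n \<times> 'n) * (K / (\<rho> / 2) ^ n)"
proof (rule opnorm_le_entrywise_bound)
  fix p q
  have "\<forall>\<^sub>F z in nhds 0. Phat G Gl \<mu> r z = Phat G Gl \<mu> R z"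
    using eventually_contour_integral_resolvent_eq[OF tendsto_Uop_at_0[OF pos assms(2-4)] \<open>r > 0\<close> \<open>R > 0\<close> sep]
    by (auto simp: Phat_def vec_eq_iff elim!: eventually_mono)
  then show "cmod (Phat_coeff G Gl \<mu> r n $ p $ q) \<le> K / (\<rho> / 2) ^ n"
    unfolding Phat_coeff_def vec_lambda_beta using \<open>\<rho> > 0\<close>
    by (intro norm_higher_deriv_div_fact_le[OF hol bound]) (auto elim!: eventually_mono)
qed

theorem lemma5p5:
  fixes G :: "real^'n^'n" and A0 B0 :: real
  assumes "pos_row_stochastic G" and "A0 > 0" and "B0 > 0"
  shows "\<exists>A6 B6. A6 > 0 \<and> B6 > 0 \<and>
    (\<forall>Gl :: nat \<Rightarrow> complex^'n^'n.
       (\<forall>l\<ge>1. opnorm (Gl l) \<le> A0 * B0 ^ (l - 1)) \<longrightarrow>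
       (\<exists>\<delta>>0. \<forall>x::real. \<bar>x\<bar> < \<delta> \<longrightarrow>
          (\<exists>M::real^'n^'n. pos_row_stochastic M \<and>
             Gpert G Gl (complex_of_real x) = (\<chi> i j. complex_of_real (M $ i $ j)))) \<longrightarrow>
       (\<forall>\<mu> r. is_eigenvalue (Uop G Gl 0) \<mu> \<longrightarrow> r > 0 \<longrightarrow>
          (\<forall>\<mu>'. is_eigenvalue (Uop G Gl 0) \<mu>' \<longrightarrow> \<mu>' \<noteq> \<mu> \<longrightarrow> cmod (\<mu>' - \<mu>) > r) \<longrightarrow>
          (\<forall>n\<ge>1. opnorm (Phat_coeff G Gl \<mu> r n) \<le> A6 * B6 ^ (n - 1))))"
proof -
  have pos: "\<And>i j. G $ i $ j > 0" using assms(1) by (simp add: pos_row_stochastic_def)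
  obtain R \<rho> K where R: "R > 0" and "\<rho> > 0" "K > 0"
    and sep: "\<And>\<mu> \<mu>'. is_eigenvalue (Uop G Gl 0) \<mu> \<Longrightarrow> is_eigenvalue (Uop G Gl 0) \<mu>' \<Longrightarrow> \<mu> \<noteq> \<mu>' \<Longrightarrow>
                R < cmod (\<mu>' - \<mu>)"
    and hol: "\<And>Gl \<mu> p q. geom_bounded A0 B0 Gl \<Longrightarrow> is_eigenvalue (Uop G Gl 0) \<mu> \<Longrightarrow>
                (\<lambda>z. Phat G Gl \<mu> R z $ p $ q) holomorphic_on ball 0 \<rho>"
    and bound: "\<And>Gl \<mu> p q z. geom_bounded A0 B0 Gl \<Longrightarrow> is_eigenvalue (Uop G Gl 0) \<mu> \<Longrightarrow>
                  z \<in> ball 0 \<rho> \<Longrightarrow> cmod (Phat G Gl \<mu> R z $ p $ q) \<le> K" for Gl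
    using Phat_uniformly_bounded[OF pos assms(2,3)] unfolding Uop_eq_walk_matrix Gpert_at_0 by metis
  define c where "c = real CARD('n \<times> 'n) * real CARD('n \<times> 'n)"
  have main: "opnorm (Phat_coeff G Gl \<mu> r n) \<le> c * K / (\<rho> / 2) * (1 / (\<rho> / 2)) ^ (n - 1)"
    if adm: "geom_bounded A0 B0 Gl" and \<mu>: "is_eigenvalue (Uop G Gl 0) \<mu>" and "r > 0"
      and iso: "\<forall>\<mu>'. is_eigenvalue (Uop G Gl 0) \<mu>' \<longrightarrow> \<mu>' \<noteq> \<mu> \<longrightarrow> cmod (\<mu>' - \<mu>) > r" and "n \<ge> 1"
    for Gl \<mu> r n
  proof -
    have "opnorm (Phat_coeff G Gl \<mu> r n) \<le> c * (K / (\<rho> / 2) ^ n)"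
      unfolding c_def using iso sep[OF \<mu>]
      by (intro opnorm_Phat_coeff_le[OF pos assms(2,3) adm R \<open>r > 0\<close> \<open>\<rho> > 0\<close> _ hol[OF adm \<mu>] bound[OF adm \<mu>]])
         auto
    also have "\<dots> = c * K / (\<rho> / 2) * (1 / (\<rho> / 2)) ^ (n - 1)"
      using \<open>n \<ge> 1\<close> by (cases n) (simp_all add: power_one_over field_simps)
    finally show ?thesis .
  qed
  show ?thesis
    using main \<open>\<rho> > 0\<close> \<open>K > 0\<close>
    by (intro exI[of _ "c * K / (\<rho> / 2)"] exI[of _ "1 / (\<rho> / 2)"]) (auto simp: c_def geom_bounded_def)
qed

end
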